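(* Let $A$ be such that $\mathfrak{g}=\mathfrak{g}(A)$ is finite dimensional and fix $i\in\{1,\dots,\theta\}$. If $\beta\in\varDelta^A_{+,j}$ for some $j\in\{1,\dots,p\}$ (i.e. $\beta$ is an $\alpha_i$-string generator), then $M_\beta$ is contained in the Lie subalgebra (in $\mathsf{Rep}(\boldsymbol\alpha_p)$) of $(\mathfrak{g}',e_i)$ generated by the submodules $M_{\alpha_k}$, $k\neq i$.
   Context: $\Bbbk$ algebraically closed of characteristic $p>0$; $A=(a_{jk})\in\Bbbk^{\theta\times\theta}$ with $a_{jj}\in\{0,2\}$ and $a_{jk}=0$ iff $a_{kj}=0$ ($j\ne k$). $\mathfrak{g}(A)$ is the contragredient Lie algebra generated by a Cartan subalgebra $\mathfrak{h}$ (with $\xi_k\in\mathfrak{h}^*$, $h_j\in\mathfrak{h}$, $\xi_k(h_j)=a_{jk}$) and $e_j,f_j$ subject to $[h,h']=0$, $[h,e_j]=\xi_j(h)e_j$, $[h,f_j]=-\xi_j(h)f_j$, $[e_j,f_k]=\delta_{jk}h_j$, modulo the largest graded ideal meeting $\mathfrak{h}$ trivially; $\mathbb{Z}^\theta$-graded with $\deg e_j=\alpha_j$. $\varDelta^A_+=\{\beta\in\mathbb{N}_0^\theta\setminus0:\mathfrak{g}_\beta\neq0\}$; in the finite-dimensional case each root space is one-dimensional, spanned by a fixed $e_\beta$. $\mathfrak{g}'=[\mathfrak{g},\mathfrak{g}]$, and $(\mathfrak{g}',e_i)$ denotes $\mathfrak{g}'$ as a Lie algebra in $\mathsf{Rep}(\boldsymbol\alpha_p)$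 (modules over $\Bbbk[t]/(t^p)$, $t$ primitive) with $t$ acting by $\operatorname{ad}e_i$. For $j\in\{1,\dots,p\}$, $\varDelta^A_{+,j}$ is the set of $\beta\ne\alpha_i$ with $\beta+k\alpha_i\in\varDelta^A_+$ for $0\le k<j$ and $\beta-\alpha_i,\beta+j\alpha_i\notin\varDelta^A_+$; for such $\beta$, $M_\beta=\bigoplus_{k=0}^{j-1}\Bbbk e_{\beta+k\alpha_i}$ (an $\operatorname{ad}e_i$-stable subspace). For $k\ne i$, $\alpha_k$ lies in some $\varDelta^A_{+,j}$. *)

theory Defs
  imports Main "HOL-Library.Function_Algebras" "HOL-Computational_Algebra.Polynomial"
begin

definition alg_closed_field :: "'k::field itself \<Rightarrow> bool" where
  "alg_closed_field _ \<longleftrightarrow> (\<forall>q :: 'k poly. degree q > 0 \<longrightarrow> (\<exists>x. poly q x = 0))"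

section \<open>Degrees in Z^theta (indices = the finite type 'i)\<close>

definition simple_root :: "'i \<Rightarrow> ('i \<Rightarrow> int)" where
  "simple_root j = (\<lambda>k. if k = j then 1 else 0)"

definition deg_add :: "('i \<Rightarrow> int) \<Rightarrow> ('i \<Rightarrow> int) \<Rightarrow> ('i \<Rightarrow> int)" where
  "deg_add \<beta> \<gamma> = (\<lambda>k. \<beta> k + \<gamma> k)"

definition deg_smul :: "int \<Rightarrow> ('i \<Rightarrow> int) \<Rightarrow> ('i \<Rightarrow> int)" where
  "deg_smul n \<beta> = (\<lambda>k. n * \<beta> k)"

definition lie_algebra :: "('k::field \<Rightarrow> 'g::ab_group_add \<Rightarrow> 'g) \<Rightarrow> ('g \<Rightarrow> 'g \<Rightarrow> 'g) \<Rightarrow> bool" where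
  "lie_algebra s b \<longleftrightarrow> vector_space s
     \<and> (\<forall>x y z. b (x + y) z = b x z + b y z)
     \<and> (\<forall>x y z. b x (y + z) = b x y + b x z)
     \<and> (\<forall>c x y. b (s c x) y = s c (b x y))
     \<and> (\<forall>c x y. b x (s c y) = s c (b x y))
     \<and> (\<forall>x. b x x = 0)
     \<and> (\<forall>x y z. b x (b y z) + b y (b z x) + b z (b x y) = 0)"

definition lie_closed :: "('g \<Rightarrow> 'g \<Rightarrow> 'g) \<Rightarrow> 'g set \<Rightarrow> bool" where
  "lie_closed b S \<longleftrightarrow> (\<forall>x\<in>S. \<forall>y\<in>S. b x y \<in> S)"

definition derived_alg :: "('k::field \<Rightarrow> 'g::ab_group_add \<Rightarrow> 'g) \<Rightarrow> ('g \<Rightarrow> 'g \<Rightarrow> 'g) \<Rightarrow> 'g set" where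
  "derived_alg s b = module.span s {b x y | x y. True}"

text \<open>Lie subalgebra of (g', t) in Rep(alpha_p), t acting by ad t0, generated by X:
  smallest subspace of g' closed under the bracket and stable under ad t0 containing X.\<close>
definition rep_subalg_gen ::
  "('k::field \<Rightarrow> 'g::ab_group_add \<Rightarrow> 'g) \<Rightarrow> ('g \<Rightarrow> 'g \<Rightarrow> 'g) \<Rightarrow> 'g \<Rightarrow> 'g set \<Rightarrow> 'g set" where
  "rep_subalg_gen s b t0 X = \<Inter>{S. S \<subseteq> derived_alg s b \<and> module.subspace s S \<and> lie_closed b S
        \<and> (\<forall>x\<in>S. b t0 x \<in> S) \<and> X \<subseteq> S}"

definition mat_rank :: "('i \<Rightarrow> 'i \<Rightarrow> 'k::field) \<Rightarrow> nat" where
  "mat_rank A = vector_space.dim (\<lambda>c (v::'i \<Rightarrow> 'k) k. c * v k) (range A)"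

definition admissible_matrix :: "('i::finite \<Rightarrow> 'i \<Rightarrow> 'k::field) \<Rightarrow> bool" where
  "admissible_matrix A \<longleftrightarrow> (\<forall>j. A j j = 0 \<or> A j j = 2)
     \<and> (\<forall>j k. j \<noteq> k \<longrightarrow> (A j k = 0 \<longleftrightarrow> A k j = 0))"

definition lie_grading :: "('k::field \<Rightarrow> 'g::ab_group_add \<Rightarrow> 'g) \<Rightarrow> ('g \<Rightarrow> 'g \<Rightarrow> 'g)
     \<Rightarrow> (('i \<Rightarrow> int) \<Rightarrow> 'g set) \<Rightarrow> bool" where
  "lie_grading s b G \<longleftrightarrow> (\<forall>\<beta>. module.subspace s (G \<beta>))
     \<and> (\<forall>x. \<exists>!c. finite {\<beta>. c \<beta> \<noteq> 0} \<and> (\<forall>\<beta>. c \<beta> \<in> G \<beta>) \<and> x = (\<Sum>\<beta>\<in>{\<beta>. c \<beta> \<noteq> 0}. c \<beta>))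
     \<and> (\<forall>\<beta> \<gamma> x y. x \<in> G \<beta> \<longrightarrow> y \<in> G \<gamma> \<longrightarrow> b x y \<in> G (deg_add \<beta> \<gamma>))"

definition graded_ideal :: "('k::field \<Rightarrow> 'g::ab_group_add \<Rightarrow> 'g) \<Rightarrow> ('g \<Rightarrow> 'g \<Rightarrow> 'g)
     \<Rightarrow> (('i \<Rightarrow> int) \<Rightarrow> 'g set) \<Rightarrow> 'g set \<Rightarrow> bool" where
  "graded_ideal s b G I \<longleftrightarrow> module.subspace s I \<and> (\<forall>x y. y \<in> I \<longrightarrow> b x y \<in> I)
     \<and> I \<subseteq> module.span s (\<Union>\<beta>. I \<inter> G \<beta>)"

text \<open>(s, b) together with the data (H, hh, xi, e, f, G) is the contragredient Lie algebra g(A):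
  H with hh, xi is a (minimal) realization of A, the defining relations hold, the algebra is
  generated by H and the e_j, f_j, it is Z^theta-graded with deg e_j = alpha_j, deg f_j = - alpha_j,
  deg H = 0, and no nonzero graded ideal meets H trivially (i.e. the largest such ideal has been
  factored out).\<close>
definition is_contragredient ::
  "('i::finite \<Rightarrow> 'i \<Rightarrow> 'k::field) \<Rightarrow> ('k \<Rightarrow> 'g::ab_group_add \<Rightarrow> 'g) \<Rightarrow> ('g \<Rightarrow> 'g \<Rightarrow> 'g)
   \<Rightarrow> 'g set \<Rightarrow> ('i \<Rightarrow> 'g) \<Rightarrow> ('i \<Rightarrow> 'g \<Rightarrow> 'k) \<Rightarrow> ('i \<Rightarrow> 'g) \<Rightarrow> ('i \<Rightarrow> 'g)
   \<Rightarrow> (('i \<Rightarrow> int) \<Rightarrow> 'g set) \<Rightarrow> bool" where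
  "is_contragredient A s b H hh xi e f G \<longleftrightarrow>
     lie_algebra s b
     \<comment> \<open>realization\<close>
     \<and> module.subspace s H
     \<and> vector_space.dim s H = 2 * card (UNIV :: 'i set) - mat_rank A
     \<and> (\<forall>j. hh j \<in> H) \<and> module.independent s (range hh) \<and> inj hh
     \<and> (\<forall>k. \<forall>x\<in>H. \<forall>y\<in>H. \<forall>c. xi k (x + y) = xi k x + xi k y \<and> xi k (s c x) = c * xi k x)
     \<and> (\<forall>c :: 'i \<Rightarrow> 'k. (\<forall>x\<in>H. (\<Sum>k\<in>UNIV. c k * xi k x) = 0) \<longrightarrow> (\<forall>k. c k = 0))
     \<and> (\<forall>j k. xi k (hh j) = A j k)
     \<comment> \<open>defining relations\<close>
     \<and> (\<forall>x\<in>H. \<forall>y\<in>H. b x y = 0)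
     \<and> (\<forall>x\<in>H. \<forall>j. b x (e j) = s (xi j x) (e j))
     \<and> (\<forall>x\<in>H. \<forall>j. b x (f j) = s (- xi j x) (f j))
     \<and> (\<forall>j k. b (e j) (f k) = (if j = k then hh j else 0))
     \<comment> \<open>generation\<close>
     \<and> (\<forall>S. module.subspace s S \<and> lie_closed b S \<and> H \<subseteq> S \<and> range e \<subseteq> S \<and> range f \<subseteq> S
            \<longrightarrow> S = UNIV)
     \<comment> \<open>grading\<close>
     \<and> lie_grading s b G
     \<and> H \<subseteq> G (\<lambda>_. 0)
     \<and> (\<forall>j. e j \<in> G (simple_root j) \<and> f j \<in> G (deg_smul (-1) (simple_root j)))
     \<comment> \<open>the largest graded ideal meeting H trivially has been factored out\<close>
     \<and> (\<forall>I. graded_ideal s b G I \<and> I \<inter> H = {0} \<longrightarrow> I = {0})"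

definition fin_dim :: "('k::field \<Rightarrow> 'g::ab_group_add \<Rightarrow> 'g) \<Rightarrow> bool" where
  "fin_dim s \<longleftrightarrow> (\<exists>B. finite B \<and> module.span s B = UNIV)"

definition pos_roots :: "(('i \<Rightarrow> int) \<Rightarrow> 'g::zero set) \<Rightarrow> ('i \<Rightarrow> int) set" where
  "pos_roots G = {\<beta>. (\<forall>k. \<beta> k \<ge> 0) \<and> \<beta> \<noteq> (\<lambda>_. 0) \<and> G \<beta> \<noteq> {0}}"

text \<open>Delta^A_{+,j} relative to the fixed simple index i.\<close>
definition string_gen :: "(('i \<Rightarrow> int) \<Rightarrow> 'g::zero set) \<Rightarrow> 'i \<Rightarrow> nat \<Rightarrow> ('i \<Rightarrow> int) set" where
  "string_gen G i j = {\<beta>. \<beta> \<noteq> simple_root i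
       \<and> (\<forall>k<j. deg_add \<beta> (deg_smul (int k) (simple_root i)) \<in> pos_roots G)
       \<and> deg_add \<beta> (deg_smul (-1) (simple_root i)) \<notin> pos_roots G
       \<and> deg_add \<beta> (deg_smul (int j) (simple_root i)) \<notin> pos_roots G}"

text \<open>M_beta = sum of the root spaces g_{beta + k alpha_i}, 0 <= k < j (each one-dimensional).\<close>
definition M_sub :: "('k::field \<Rightarrow> 'g::ab_group_add \<Rightarrow> 'g) \<Rightarrow> (('i \<Rightarrow> int) \<Rightarrow> 'g set)
     \<Rightarrow> 'i \<Rightarrow> ('i \<Rightarrow> int) \<Rightarrow> nat \<Rightarrow> 'g set" where
  "M_sub s G i \<beta> j = module.span s (\<Union>k<j. G (deg_add \<beta> (deg_smul (int k) (simple_root i))))"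

end

(*
  A positive root space g_gamma is spanned by the iterated brackets [e_m1, [e_m2, ..., e_mn]]
  of degree gamma: this follows from the triangular decomposition g = n_- + h + n_+ and the
  uniqueness of graded components. Let S be an ad(e_i)-stable Lie subalgebra containing every
  e_k with k <> i. An iterated bracket lies in S unless it is e_i itself, because e_i can only
  occur as the innermost letter, where [e_m, e_i] = -[e_i, e_m]. So S contains every root
  space except g_alpha_i, and in particular M_beta.

  Each e_k lies in M_alpha_k, because the alpha_i-string through alpha_k has at most p terms.
  Indeed x = (ad e_i)^p e_k is killed by every f_j, since
  [f_i, (ad e_i)^(n+1) e_k] = -(sum_(m<=n) (a_ik + m a_ii)) (ad e_i)^n e_k and the coefficient
  vanishes for n + 1 = p when a_ii is 0 or 2. Hence x generates a graded ideal meeting h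
  trivially, so x = 0, and therefore g_(alpha_k + p alpha_i) = 0.
*)
theory Submission
  imports Defs
begin

section \<open>Degrees and root strings\<close>

lemma sum_string_coeff_CHAR:
  fixes a c :: "'a::comm_ring_1"
  assumes "c = 0 \<or> c = 2"
  shows "(\<Sum>m<CHAR('a). a + of_nat m * c) = 0"
proof -
  have "(\<Sum>m<n. a + of_nat m * 2) = of_nat n * (a + of_nat n - 1)" for n :: nat
    by (induction n) (simp_all add: algebra_simps)
  then show ?thesis
    using assms by auto
qed

abbreviation neg_simple_root :: "'i \<Rightarrow> 'i \<Rightarrow> int" where
  "neg_simple_root m \<equiv> deg_smul (-1) (simple_root m)"

abbreviation string_deg :: "('i \<Rightarrow> int) \<Rightarrow> 'i \<Rightarrow> nat \<Rightarrow> 'i \<Rightarrow> int" where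
  "string_deg \<beta> i n \<equiv> deg_add \<beta> (deg_smul (int n) (simple_root i))"

lemma string_gen_first_gap:
  assumes "string_deg \<beta> i 0 \<in> pos_roots G" and "deg_add \<beta> (neg_simple_root i) \<notin> pos_roots G"
    and "\<beta> \<noteq> simple_root i" and "string_deg \<beta> i n \<notin> pos_roots G"
  shows "\<exists>l\<in>{1..n}. \<beta> \<in> string_gen G i l"
proof -
  define l where "l = (LEAST l. string_deg \<beta> i l \<notin> pos_roots G)"
  have gap: "string_deg \<beta> i l \<notin> pos_roots G"
    unfolding l_def using assms(4) by (rule LeastI)
  have "l \<le> n"
    unfolding l_def using assms(4) by (rule Least_le)
  have "string_deg \<beta> i m \<in> pos_roots G" if "m < l" for m
    using not_less_Least[OF that[unfolded l_def]] by blast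
  then have "\<beta> \<in> string_gen G i l"
    using assms(2,3) gap unfolding string_gen_def by blast
  moreover have "l \<noteq> 0"
    using gap assms(1) by metis
  ultimately show ?thesis
    using \<open>l \<le> n\<close> by auto
qed

lemma string_gen_pos_root: "\<beta> \<in> string_gen G i j \<Longrightarrow> 1 \<le> j \<Longrightarrow> \<beta> \<in> pos_roots G"
  unfolding string_gen_def by (auto dest!: spec[of _ 0] simp: deg_add_def deg_smul_def)

lemma string_deg_ne_simple_root:
  assumes "\<beta> \<in> pos_roots G" and "\<beta> \<noteq> simple_root i"
  shows "string_deg \<beta> i n \<noteq> simple_root i"
proof
  assume eq: "string_deg \<beta> i n = simple_root i"
  have off_i: "\<beta> t = 0" if "t \<noteq> i" for t
    using fun_cong[OF eq, of t] that by (simp add: deg_add_def deg_smul_def simple_root_def)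
  have "\<beta> i + int n = 1" "0 \<le> \<beta> i"
    using fun_cong[OF eq, of i] assms(1) by (simp_all add: deg_add_def deg_smul_def simple_root_def pos_roots_def)
  then consider "\<beta> i = 0" | "\<beta> i = 1" by linarith
  then show False
  proof cases
    case 1
    then have "\<beta> = (\<lambda>_. 0)" unfolding fun_eq_iff using off_i by metis
    then show False using assms(1) by (simp add: pos_roots_def)
  next
    case 2
    then have "\<beta> = simple_root i" using off_i by (auto simp: fun_eq_iff simple_root_def)
    then show False using assms(2) by simp
  qed
qed

section \<open>Lie algebras and iterated brackets\<close>

locale lie_alg = vector_space s for s :: "'k::field \<Rightarrow> 'g::ab_group_add \<Rightarrow> 'g" +
  fixes b :: "'g \<Rightarrow> 'g \<Rightarrow> 'g"
  assumes lie_algebra: "lie_algebra s b"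
begin

lemma bracket_add_left: "b (x + y) z = b x z + b y z"
  using lie_algebra unfolding lie_algebra_def by blast

lemma bracket_add_right: "b x (y + z) = b x y + b x z"
  using lie_algebra unfolding lie_algebra_def by blast

lemma bracket_scale_left: "b (s c x) y = s c (b x y)"
  using lie_algebra unfolding lie_algebra_def by blast

lemma bracket_scale_right: "b x (s c y) = s c (b x y)"
  using lie_algebra unfolding lie_algebra_def by blast

lemma bracket_self [simp]: "b x x = 0"
  using lie_algebra unfolding lie_algebra_def by blast

lemma jacobi: "b x (b y z) + b y (b z x) + b z (b x y) = 0"
  using lie_algebra unfolding lie_algebra_def by blast

lemma bracket_zero_left [simp]: "b 0 y = 0"
  using bracket_add_left[of 0 0 y] by simp

lemma bracket_zero_right [simp]: "b x 0 = 0"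
  using bracket_add_right[of x 0 0] by simp

lemma bracket_neg_left: "b (- x) y = - b x y"
  using bracket_add_left[of x "- x" y] by (simp add: add_eq_0_iff)

lemma bracket_neg_right: "b x (- y) = - b x y"
  using bracket_add_right[of x y "- y"] by (simp add: add_eq_0_iff)

lemma bracket_antisym: "b x y = - b y x"
proof -
  have "b x x + b y x + (b x y + b y y) = 0"
    using bracket_self[of "x + y"] by (simp only: bracket_add_left bracket_add_right)
  then show ?thesis
    by (simp add: eq_neg_iff_add_eq_0 add.commute)
qed

lemma bracket_leibniz: "b x (b y z) = b (b x y) z + b y (b x z)"
  using jacobi[of x y z] bracket_antisym[of z x] bracket_antisym[of z "b x y"]
  by (simp add: bracket_neg_right algebra_simps eq_neg_iff_add_eq_0)

lemma bracket_bracket_left: "b (b x y) z = b x (b y z) - b y (b x z)"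
  using bracket_leibniz[of x y z] by (simp add: algebra_simps)

lemma bracket_right_span_closed:
  assumes "subspace W" and "\<And>u. u \<in> X \<Longrightarrow> b y u \<in> W" and "u \<in> span X"
  shows "b y u \<in> W"
  using assms(3)
proof (induction rule: span_induct_alt)
  case base
  then show ?case using assms(1) subspace_0 by simp
next
  case (step c x z)
  then show ?case
    using assms by (simp add: bracket_add_right bracket_scale_right subspace_add subspace_scale)
qed

lemma ideal_if_stable_under_generators:
  assumes generated: "\<And>S. subspace S \<Longrightarrow> lie_closed b S \<Longrightarrow> Gen \<subseteq> S \<Longrightarrow> S = UNIV"
    and W: "subspace W" and stable: "\<And>y w. y \<in> Gen \<Longrightarrow> w \<in> W \<Longrightarrow> b y w \<in> W"
    and "w \<in> W"
  shows "b y w \<in> W"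
proof -
  define T where "T = {y. \<forall>w\<in>W. b y w \<in> W}"
  have "subspace T"
    unfolding subspace_def T_def
    using W by (auto simp: bracket_add_left bracket_scale_left subspace_0 subspace_add subspace_scale)
  moreover have "lie_closed b T"
    unfolding lie_closed_def T_def
    using W by (auto simp: bracket_bracket_left subspace_diff)
  moreover have "Gen \<subseteq> T"
    unfolding T_def using stable by blast
  ultimately show ?thesis
    using generated \<open>w \<in> W\<close> unfolding T_def by blast
qed

inductive ad_iter :: "('i \<Rightarrow> 'g) \<Rightarrow> ('i \<Rightarrow> 'i \<Rightarrow> int) \<Rightarrow> ('g \<times> ('i \<Rightarrow> int)) set
    \<Rightarrow> 'g \<Rightarrow> ('i \<Rightarrow> int) \<Rightarrow> bool"
  for E dg X where
  base: "(x, d) \<in> X \<Longrightarrow> ad_iter E dg X x d"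
| step: "ad_iter E dg X v \<delta> \<Longrightarrow> ad_iter E dg X (b (E m) v) (deg_add (dg m) \<delta>)"

definition ad_closure ::
    "('i \<Rightarrow> 'g) \<Rightarrow> ('i \<Rightarrow> 'i \<Rightarrow> int) \<Rightarrow> ('g \<times> ('i \<Rightarrow> int)) set \<Rightarrow> 'g set" where
  "ad_closure E dg X = {v. \<exists>\<delta>. ad_iter E dg X v \<delta>}"

abbreviation ad_words :: "('i \<Rightarrow> 'g) \<Rightarrow> ('i \<Rightarrow> 'i \<Rightarrow> int) \<Rightarrow> 'g set" where
  "ad_words E dg \<equiv> ad_closure E dg (range (\<lambda>m. (E m, dg m)))"

lemma ad_iter_degree_invariant:
  assumes "\<And>x d. (x, d) \<in> X \<Longrightarrow> Q d" and "\<And>m d. Q d \<Longrightarrow> Q (deg_add (dg m) d)"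
    and "ad_iter E dg X v \<delta>"
  shows "Q \<delta>"
  using assms(3) by induction (use assms(1,2) in blast)+

lemma ad_closure_base: "(x, d) \<in> X \<Longrightarrow> x \<in> ad_closure E dg X"
  by (auto simp: ad_closure_def intro: ad_iter.base)

lemma ad_closure_step: "v \<in> ad_closure E dg X \<Longrightarrow> b (E m) v \<in> ad_closure E dg X"
  by (auto simp: ad_closure_def intro: ad_iter.step)

lemma ad_words_gen: "E m \<in> ad_words E dg"
  by (rule ad_closure_base) blast

lemma ad_iter_eigenvector:
  assumes "\<And>m. \<exists>c. b h (E m) = s c (E m)" and "\<And>x d. (x, d) \<in> X \<Longrightarrow> \<exists>c. b h x = s c x"
    and "ad_iter E dg X v \<delta>"
  shows "\<exists>c. b h v = s c v"
  using assms(3)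
proof (induction rule: ad_iter.induct)
  case (base x d)
  then show ?case using assms(2) by blast
next
  case (step v \<delta> m)
  obtain c where c: "b h v = s c v" using step.IH by blast
  obtain c' where c': "b h (E m) = s c' (E m)" using assms(1) by blast
  have "b h (b (E m) v) = s (c' + c) (b (E m) v)"
    by (simp add: bracket_leibniz[of h] c c' bracket_scale_left bracket_scale_right scale_left_distrib)
  then show ?case by blast
qed

lemma ad_words_eigenvector:
  assumes diag: "\<And>m. \<exists>c. b h (E m) = s c (E m)" and "u \<in> ad_words E dg"
  shows "\<exists>c. b h u = s c u"
proof -
  obtain \<delta> where \<delta>: "ad_iter E dg (range (\<lambda>m. (E m, dg m))) u \<delta>"
    using assms(2) by (auto simp: ad_closure_def)
  show ?thesis
  proof (rule ad_iter_eigenvector[where E = E, OF _ _ \<delta>])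
    show "\<exists>c. b h x = s c x" if "(x, d) \<in> range (\<lambda>m. (E m, dg m))" for x d
      using that diag by auto
  qed (rule diag)
qed

text \<open>By the Jacobi identity, [F m, [E n, v]] = [[F m, E n], v] + [E n, [F m, v]], where
  [F m, E n] acts diagonally on words in the E's.\<close>
lemma ad_iter_lowering:
  assumes FE: "\<And>m n. b (F m) (E n) \<in> D"
    and diag_E: "\<And>h n. h \<in> D \<Longrightarrow> \<exists>c. b h (E n) = s c (E n)"
    and diag_X: "\<And>h x d. h \<in> D \<Longrightarrow> (x, d) \<in> X \<Longrightarrow> \<exists>c. b h x = s c x"
    and F_X: "\<And>m x d. (x, d) \<in> X \<Longrightarrow> b (F m) x \<in> span (ad_closure E dg X \<union> Z)"
    and E_Z: "\<And>n z. z \<in> Z \<Longrightarrow> b (E n) z \<in> span (ad_closure E dg X \<union> Z)"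
    and "ad_iter E dg X v \<delta>"
  shows "b (F m) v \<in> span (ad_closure E dg X \<union> Z)"
  using assms(6)
proof (induction arbitrary: m rule: ad_iter.induct)
  case (base x d)
  then show ?case using F_X by blast
next
  case (step v \<delta> n)
  let ?W = "span (ad_closure E dg X \<union> Z)"
  have "\<exists>c. b (b (F m) (E n)) v = s c v"
    by (rule ad_iter_eigenvector[OF _ _ step.hyps]) (use FE diag_E diag_X in blast)+
  moreover have "v \<in> ?W"
    using step.hyps by (auto intro: span_base simp: ad_closure_def)
  ultimately have "b (b (F m) (E n)) v \<in> ?W"
    by (auto simp: span_scale)
  moreover have "b (E n) (b (F m) v) \<in> ?W"
  proof (rule bracket_right_span_closed[OF subspace_span _ step.IH])
    show "b (E n) u \<in> ?W" if "u \<in> ad_closure E dg X \<union> Z" for u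
      using that E_Z by (auto intro: span_base ad_closure_step)
  qed
  ultimately show ?case
    by (simp add: bracket_leibniz[of "F m"] span_add)
qed

lemma ad_raising_triangular:
  assumes diag_E: "\<And>h m. h \<in> H \<Longrightarrow> \<exists>c. b h (E m) = s c (E m)"
    and diag_F: "\<And>h m. h \<in> H \<Longrightarrow> \<exists>c. b h (F m) = s c (F m)"
    and EF: "\<And>m n. b (E m) (F n) \<in> H"
    and u: "u \<in> ad_words E dgE \<union> H \<union> ad_words F dgF"
  shows "b (E m) u \<in> span (ad_words E dgE \<union> H \<union> ad_words F dgF)"
proof -
  from u consider "u \<in> ad_words E dgE" | "u \<in> H" | "u \<in> ad_words F dgF" by blast
  then show ?thesis
  proof cases
    case 1
    then show ?thesis by (auto intro: span_base ad_closure_step)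
  next
    case 2
    then obtain c where "b (E m) u = - s c (E m)"
      using diag_E bracket_antisym by metis
    then show ?thesis by (simp add: span_neg span_scale span_base ad_words_gen)
  next
    case 3
    then obtain \<delta> where \<delta>: "ad_iter F dgF (range (\<lambda>m. (F m, dgF m))) u \<delta>"
      by (auto simp: ad_closure_def)
    have "b (E m) u \<in> span (ad_words F dgF \<union> H)"
    proof (rule ad_iter_lowering[where D = H and F = E, OF _ _ _ _ _ \<delta>])
      show "b (E m') x \<in> span (ad_words F dgF \<union> H)"
        if "(x, d) \<in> range (\<lambda>m. (F m, dgF m))" for m' x d
        using that EF by (blast intro: span_base)
      show "b (F n) z \<in> span (ad_words F dgF \<union> H)" if z: "z \<in> H" for n z
      proof -
        obtain c where "b (F n) z = - s c (F n)"
          using diag_F[OF z] bracket_antisym by metis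
        then show ?thesis by (simp add: span_neg span_scale span_base ad_words_gen)
      qed
    qed (use EF diag_F in auto)
    then show ?thesis
      by (rule subsetD[OF span_mono, rotated]) blast
  qed
qed

lemma ad_diagonal_triangular:
  assumes abelian: "\<And>x y. x \<in> H \<Longrightarrow> y \<in> H \<Longrightarrow> b x y = 0"
    and diag_E: "\<And>h m. h \<in> H \<Longrightarrow> \<exists>c. b h (E m) = s c (E m)"
    and diag_F: "\<And>h m. h \<in> H \<Longrightarrow> \<exists>c. b h (F m) = s c (F m)"
    and h: "h \<in> H" and u: "u \<in> ad_words E dgE \<union> H \<union> ad_words F dgF"
  shows "b h u \<in> span (ad_words E dgE \<union> H \<union> ad_words F dgF)"
proof -
  from u consider "u \<in> ad_words E dgE \<union> ad_words F dgF" | "u \<in> H" by blast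
  then show ?thesis
  proof cases
    case 1
    then obtain c where "b h u = s c u"
      using ad_words_eigenvector[where E = E, OF diag_E[OF h]]
        ad_words_eigenvector[where E = F, OF diag_F[OF h]] by blast
    then show ?thesis using u by (simp add: span_base span_scale)
  next
    case 2
    then show ?thesis using abelian h by (simp add: span_zero)
  qed
qed

lemma ad_generator_triangular:
  assumes H: "subspace H" and abelian: "\<And>x y. x \<in> H \<Longrightarrow> y \<in> H \<Longrightarrow> b x y = 0"
    and diag_E: "\<And>h m. h \<in> H \<Longrightarrow> \<exists>c. b h (E m) = s c (E m)"
    and diag_F: "\<And>h m. h \<in> H \<Longrightarrow> \<exists>c. b h (F m) = s c (F m)"
    and EF: "\<And>m n. b (E m) (F n) \<in> H"
    and y: "y \<in> H \<union> range E \<union> range F" and u: "u \<in> ad_words E dgE \<union> H \<union> ad_words F dgF"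
  shows "b y u \<in> span (ad_words E dgE \<union> H \<union> ad_words F dgF)"
proof -
  have FE: "b (F m) (E n) \<in> H" for m n
    using EF[of n m] bracket_antisym[of "F m"] H by (simp add: subspace_neg)
  have swap: "ad_words E dgE \<union> H \<union> ad_words F dgF = ad_words F dgF \<union> H \<union> ad_words E dgE"
    by blast
  from y consider "y \<in> H" | m where "y = E m" | m where "y = F m" by blast
  then show ?thesis
  proof cases
    case 1
    then show ?thesis using ad_diagonal_triangular[OF abelian diag_E diag_F _ u] by blast
  next
    case (2 m)
    then show ?thesis using ad_raising_triangular[OF diag_E diag_F EF u] by simp
  next
    case (3 m)
    then show ?thesis
      using ad_raising_triangular[where E = F and F = E and dgE = dgF and dgF = dgE,
          OF diag_F diag_E FE, of u m] u by (simp only: swap)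
  qed
qed

lemma triangular_span_UNIV:
  assumes generated:
      "\<And>S. subspace S \<Longrightarrow> lie_closed b S \<Longrightarrow> H \<union> range E \<union> range F \<subseteq> S \<Longrightarrow> S = UNIV"
    and H: "subspace H" and abelian: "\<And>x y. x \<in> H \<Longrightarrow> y \<in> H \<Longrightarrow> b x y = 0"
    and diag_E: "\<And>h m. h \<in> H \<Longrightarrow> \<exists>c. b h (E m) = s c (E m)"
    and diag_F: "\<And>h m. h \<in> H \<Longrightarrow> \<exists>c. b h (F m) = s c (F m)"
    and EF: "\<And>m n. b (E m) (F n) \<in> H"
  shows "span (ad_words E dgE \<union> H \<union> ad_words F dgF) = UNIV"
proof -
  let ?B = "ad_words E dgE \<union> H \<union> ad_words F dgF"
  have stable: "b y u \<in> span ?B" if "y \<in> H \<union> range E \<union> range F" "u \<in> ?B" for y u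
    using H abelian diag_E diag_F EF that by (rule ad_generator_triangular)
  have ideal: "b y w \<in> span ?B" if "w \<in> span ?B" for y w
  proof (rule ideal_if_stable_under_generators[OF generated subspace_span _ that])
    show "b y' w' \<in> span ?B" if "y' \<in> H \<union> range E \<union> range F" "w' \<in> span ?B" for y' w'
      using bracket_right_span_closed[OF subspace_span stable[OF that(1)] that(2)] .
  qed
  have "lie_closed b (span ?B)"
    unfolding lie_closed_def using ideal by blast
  moreover have "H \<union> range E \<union> range F \<subseteq> span ?B"
    using ad_words_gen[of E _ dgE] ad_words_gen[of F _ dgF] span_superset[of ?B] by blast
  ultimately show ?thesis
    by (rule generated[OF subspace_span])
qed

end

section \<open>Contragredient Lie algebras\<close>

locale contragredient = lie_alg s b for s :: "'k::field \<Rightarrow> 'g::ab_group_add \<Rightarrow> 'g" and b +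
  fixes A :: "'i::finite \<Rightarrow> 'i \<Rightarrow> 'k" and H :: "'g set" and hh :: "'i \<Rightarrow> 'g"
    and xi :: "'i \<Rightarrow> 'g \<Rightarrow> 'k" and e f :: "'i \<Rightarrow> 'g" and G :: "('i \<Rightarrow> int) \<Rightarrow> 'g set"
  assumes contragredient: "is_contragredient A s b H hh xi e f G"
begin

lemma H_subspace: "subspace H"
  using contragredient by (simp add: is_contragredient_def)

lemma hh_in_H: "hh j \<in> H"
  using contragredient by (simp add: is_contragredient_def)

lemma hh_nonzero: "hh j \<noteq> 0"
proof -
  have "independent (range hh)"
    using contragredient by (simp add: is_contragredient_def)
  then show ?thesis using dependent_zero by force
qed

lemma xi_hh: "xi k (hh j) = A j k"
  using contragredient by (simp add: is_contragredient_def)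

lemma H_abelian: "x \<in> H \<Longrightarrow> y \<in> H \<Longrightarrow> b x y = 0"
  using contragredient by (simp add: is_contragredient_def)

lemma bracket_H_e: "x \<in> H \<Longrightarrow> b x (e j) = s (xi j x) (e j)"
  using contragredient by (simp add: is_contragredient_def)

lemma bracket_H_f: "x \<in> H \<Longrightarrow> b x (f j) = s (- xi j x) (f j)"
  using contragredient by (simp add: is_contragredient_def)

lemma bracket_e_f: "b (e j) (f k) = (if j = k then hh j else 0)"
  using contragredient by (simp add: is_contragredient_def)

lemma bracket_f_e: "b (f j) (e k) = (if j = k then - hh j else 0)"
  by (subst bracket_antisym) (simp add: bracket_e_f)

lemma bracket_f_e_in_H: "b (f j) (e k) \<in> H"
  by (simp add: bracket_f_e hh_in_H subspace_0[OF H_subspace] subspace_neg[OF H_subspace])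

lemma generated:
  "subspace S \<Longrightarrow> lie_closed b S \<Longrightarrow> H \<union> range e \<union> range f \<subseteq> S \<Longrightarrow> S = UNIV"
  using contragredient by (simp add: is_contragredient_def)

lemma grading: "lie_grading s b G"
  using contragredient by (simp add: is_contragredient_def)

lemma H_degree_zero: "H \<subseteq> G (\<lambda>_. 0)"
  using contragredient by (simp add: is_contragredient_def)

lemma e_degree: "e j \<in> G (simple_root j)"
  using contragredient by (simp add: is_contragredient_def)

lemma f_degree: "f j \<in> G (neg_simple_root j)"
  using contragredient by (simp add: is_contragredient_def)

lemma graded_ideal_trivial: "graded_ideal s b G I \<Longrightarrow> I \<inter> H = {0} \<Longrightarrow> I = {0}"
  using contragredient by (simp add: is_contragredient_def)

lemma G_subspace: "subspace (G \<delta>)"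
  using grading by (simp add: lie_grading_def)

lemma bracket_degree: "x \<in> G \<beta> \<Longrightarrow> y \<in> G \<gamma> \<Longrightarrow> b x y \<in> G (deg_add \<beta> \<gamma>)"
  using grading by (simp add: lie_grading_def)

definition supported_sums :: "('i \<Rightarrow> int) set \<Rightarrow> 'g set" where
  "supported_sums P = {\<Sum>\<delta>\<in>S. c \<delta> | S c. finite S \<and> S \<subseteq> P \<and> (\<forall>\<delta>. c \<delta> \<in> G \<delta>)}"

lemma subspace_supported_sums: "subspace (supported_sums P)"
  unfolding subspace_def
proof (intro conjI ballI allI)
  show "0 \<in> supported_sums P"
    unfolding supported_sums_def
    by (rule CollectI, rule exI[of _ "{}"], rule exI[of _ "\<lambda>_. 0"])
      (simp add: subspace_0[OF G_subspace])
next
  fix x y assume "x \<in> supported_sums P" "y \<in> supported_sums P"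
  then obtain S1 c1 S2 c2 where
    x: "x = (\<Sum>\<delta>\<in>S1. c1 \<delta>)" "finite S1" "S1 \<subseteq> P" "\<forall>\<delta>. c1 \<delta> \<in> G \<delta>" and
    y: "y = (\<Sum>\<delta>\<in>S2. c2 \<delta>)" "finite S2" "S2 \<subseteq> P" "\<forall>\<delta>. c2 \<delta> \<in> G \<delta>"
    unfolding supported_sums_def by blast
  define c where "c \<delta> = (if \<delta> \<in> S1 then c1 \<delta> else 0) + (if \<delta> \<in> S2 then c2 \<delta> else 0)" for \<delta>
  have "x + y = (\<Sum>\<delta>\<in>S1 \<union> S2. c \<delta>)"
    using x(1,2) y(1,2)
    by (simp add: c_def sum.distrib flip: sum.inter_restrict)
  moreover have "\<forall>\<delta>. c \<delta> \<in> G \<delta>"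
    using x(4) y(4) by (simp add: c_def subspace_add[OF G_subspace] subspace_0[OF G_subspace])
  ultimately show "x + y \<in> supported_sums P"
    unfolding supported_sums_def using x(2,3) y(2,3) by blast
next
  fix a x assume "x \<in> supported_sums P"
  then obtain S c where x: "x = (\<Sum>\<delta>\<in>S. c \<delta>)" "finite S" "S \<subseteq> P" "\<forall>\<delta>. c \<delta> \<in> G \<delta>"
    unfolding supported_sums_def by blast
  then have "s a x = (\<Sum>\<delta>\<in>S. s a (c \<delta>))" "\<forall>\<delta>. s a (c \<delta>) \<in> G \<delta>"
    by (simp_all add: scale_sum_right subspace_scale[OF G_subspace])
  then show "s a x \<in> supported_sums P"
    unfolding supported_sums_def using x(2,3) by blast
qed

lemma span_graded_subset_supported_sums: "span (\<Union>\<delta>\<in>P. G \<delta>) \<subseteq> supported_sums P"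
proof (rule span_minimal[OF _ subspace_supported_sums])
  show "(\<Union>\<delta>\<in>P. G \<delta>) \<subseteq> supported_sums P"
  proof
    fix x assume "x \<in> (\<Union>\<delta>\<in>P. G \<delta>)"
    then obtain \<delta> where "\<delta> \<in> P" "x \<in> G \<delta>" by blast
    then have "x = (\<Sum>\<eta>\<in>{\<delta>}. (\<lambda>\<eta>. if \<eta> = \<delta> then x else 0) \<eta>)"
      and "\<forall>\<eta>. (if \<eta> = \<delta> then x else 0) \<in> G \<eta>"
      by (simp_all add: subspace_0[OF G_subspace])
    then show "x \<in> supported_sums P"
      unfolding supported_sums_def using \<open>\<delta> \<in> P\<close> by blast
  qed
qed

lemma homogeneous_supported_sum_zero:
  assumes r: "r \<in> G \<gamma>" and "\<gamma> \<notin> P" and "r \<in> supported_sums P"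
  shows "r = 0"
proof -
  obtain S c where S: "r = (\<Sum>\<delta>\<in>S. c \<delta>)" "finite S" "S \<subseteq> P" "\<forall>\<delta>. c \<delta> \<in> G \<delta>"
    using assms(3) unfolding supported_sums_def by blast
  define c' where "c' \<delta> = (if \<delta> \<in> S then c \<delta> else 0)" for \<delta>
  define single where "single \<delta> = (if \<delta> = \<gamma> then r else 0)" for \<delta>
  have support: "(\<Sum>\<delta>\<in>{\<delta>. d \<delta> \<noteq> 0}. d \<delta>) = (\<Sum>\<delta>\<in>T. d \<delta>)" "finite {\<delta>. d \<delta> \<noteq> 0}"
    if "finite T" "{\<delta>. d \<delta> \<noteq> 0} \<subseteq> T" for d :: "('i \<Rightarrow> int) \<Rightarrow> 'g" and T
    using that by (auto intro: sum.mono_neutral_left finite_subset)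
  have "{\<delta>. c' \<delta> \<noteq> 0} \<subseteq> S" "{\<delta>. single \<delta> \<noteq> 0} \<subseteq> {\<gamma>}"
    by (auto simp: c'_def single_def)
  then have "finite {\<delta>. c' \<delta> \<noteq> 0} \<and> (\<forall>\<delta>. c' \<delta> \<in> G \<delta>) \<and> r = (\<Sum>\<delta>\<in>{\<delta>. c' \<delta> \<noteq> 0}. c' \<delta>)"
    and "finite {\<delta>. single \<delta> \<noteq> 0} \<and> (\<forall>\<delta>. single \<delta> \<in> G \<delta>) \<and> r = (\<Sum>\<delta>\<in>{\<delta>. single \<delta> \<noteq> 0}. single \<delta>)"
    using support[of S c'] support[of "{\<gamma>}" single] S r
    by (simp_all add: c'_def single_def subspace_0[OF G_subspace])
  then have "c' = single"
    using grading unfolding lie_grading_def by blast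
  then show "r = 0"
    using \<open>\<gamma> \<notin> P\<close> \<open>S \<subseteq> P\<close> by (metis c'_def single_def subsetD)
qed

lemma homogeneous_in_span_of_other_degrees:
  "r \<in> G \<gamma> \<Longrightarrow> \<gamma> \<notin> P \<Longrightarrow> r \<in> span (\<Union>\<delta>\<in>P. G \<delta>) \<Longrightarrow> r = 0"
  using homogeneous_supported_sum_zero span_graded_subset_supported_sums by blast

lemma ad_iter_homogeneous:
  assumes "\<And>m. E m \<in> G (dg m)" and "\<And>x d. (x, d) \<in> X \<Longrightarrow> x \<in> G d"
    and "ad_iter E dg X v \<delta>"
  shows "v \<in> G \<delta>"
  using assms(3) by induction (use assms(1,2) bracket_degree in blast)+

abbreviation pos_word :: "'g \<Rightarrow> ('i \<Rightarrow> int) \<Rightarrow> bool" where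
  "pos_word \<equiv> ad_iter e simple_root (range (\<lambda>m. (e m, simple_root m)))"

abbreviation neg_word :: "'g \<Rightarrow> ('i \<Rightarrow> int) \<Rightarrow> bool" where
  "neg_word \<equiv> ad_iter f neg_simple_root (range (\<lambda>m. (f m, neg_simple_root m)))"

lemma pos_word_degree: "pos_word v \<delta> \<Longrightarrow> v \<in> G \<delta>"
  by (rule ad_iter_homogeneous) (auto simp: e_degree)

lemma neg_word_degree: "neg_word v \<delta> \<Longrightarrow> v \<in> G \<delta>"
  by (rule ad_iter_homogeneous) (auto simp: f_degree)

lemma pos_word_nonneg: "pos_word v \<delta> \<Longrightarrow> 0 \<le> \<delta> t"
  by (rule ad_iter_degree_invariant[where Q = "\<lambda>d. 0 \<le> d t"])
    (auto simp: deg_add_def simple_root_def)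

lemma neg_word_nonpos: "neg_word v \<delta> \<Longrightarrow> \<delta> t \<le> 0"
  by (rule ad_iter_degree_invariant[where Q = "\<lambda>d. d t \<le> 0"])
    (auto simp: deg_add_def deg_smul_def simple_root_def)

lemma span_words_UNIV: "span (ad_words e simple_root \<union> H \<union> ad_words f neg_simple_root) = UNIV"
proof (rule triangular_span_UNIV[OF generated H_subspace H_abelian])
  show "\<exists>c. b h (e m) = s c (e m)" if "h \<in> H" for h m
    using bracket_H_e[OF that] by blast
  show "\<exists>c. b h (f m) = s c (f m)" if "h \<in> H" for h m
    using bracket_H_f[OF that] by blast
  show "b (e m) (f n) \<in> H" for m n
    by (simp add: bracket_e_f hh_in_H subspace_0[OF H_subspace])
qed

lemma words_split_by_degree:
  assumes "0 < \<gamma> k"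
  shows "ad_words e simple_root \<union> H \<union> ad_words f neg_simple_root
    \<subseteq> {v. pos_word v \<gamma>} \<union> (\<Union>\<delta>\<in>{\<delta>. \<delta> \<noteq> \<gamma>}. G \<delta>)"
proof
  fix v assume "v \<in> ad_words e simple_root \<union> H \<union> ad_words f neg_simple_root"
  then consider \<delta> where "pos_word v \<delta>" | "v \<in> H" | \<delta> where "neg_word v \<delta>"
    unfolding ad_closure_def by blast
  then show "v \<in> {v. pos_word v \<gamma>} \<union> (\<Union>\<delta>\<in>{\<delta>. \<delta> \<noteq> \<gamma>}. G \<delta>)"
  proof cases
    case (1 \<delta>)
    then show ?thesis using pos_word_degree by (cases "\<delta> = \<gamma>") auto
  next
    case 2
    have "(\<lambda>_. 0) \<noteq> \<gamma>" using assms by auto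
    then show ?thesis using 2 H_degree_zero by (intro UnI2 UN_I[of "\<lambda>_. 0"]) auto
  next
    case (3 \<delta>)
    then have "\<delta> \<noteq> \<gamma>" using neg_word_nonpos[of v \<delta> k] assms by auto
    then show ?thesis using neg_word_degree[OF 3] by (intro UnI2 UN_I[of \<delta>]) auto
  qed
qed

lemma root_space_spanned_by_words:
  assumes nonneg: "\<forall>t. 0 \<le> \<gamma> t" and nonzero: "\<gamma> \<noteq> (\<lambda>_. 0)" and x: "x \<in> G \<gamma>"
  shows "x \<in> span {v. pos_word v \<gamma>}"
proof -
  obtain k where "\<gamma> k \<noteq> 0"
    using nonzero by auto
  then have "0 < \<gamma> k"
    using nonneg by (simp add: order_less_le)
  then have "x \<in> span ({v. pos_word v \<gamma>} \<union> (\<Union>\<delta>\<in>{\<delta>. \<delta> \<noteq> \<gamma>}. G \<delta>))"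
    using words_split_by_degree span_words_UNIV span_mono by blast
  then obtain q r where qr: "x = q + r" "q \<in> span {v. pos_word v \<gamma>}"
    and r_span: "r \<in> span (\<Union>\<delta>\<in>{\<delta>. \<delta> \<noteq> \<gamma>}. G \<delta>)"
    by (auto simp: span_Un)
  have "{v. pos_word v \<gamma>} \<subseteq> G \<gamma>"
    by (auto intro: pos_word_degree)
  then have "q \<in> G \<gamma>"
    using qr(2) span_minimal[OF _ G_subspace] by blast
  then have "r \<in> G \<gamma>"
    using x qr(1) subspace_diff[OF G_subspace] by (metis add_diff_cancel_left')
  then have "r = 0"
    by (rule homogeneous_in_span_of_other_degrees[OF _ _ r_span]) simp
  then show ?thesis
    using qr by simp
qed

lemma annihilated_vector_words_stable:
  assumes diag: "\<And>h. h \<in> H \<Longrightarrow> \<exists>c. b h x = s c x"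
    and annihilated: "\<And>m. b (f m) x = 0"
    and y: "y \<in> H \<union> range e \<union> range f" and u: "u \<in> ad_closure e simple_root {(x, \<delta>)}"
  shows "b y u \<in> span (ad_closure e simple_root {(x, \<delta>)})"
proof -
  obtain d where d: "ad_iter e simple_root {(x, \<delta>)} u d"
    using u by (auto simp: ad_closure_def)
  from y consider "y \<in> H" | m where "y = e m" | m where "y = f m" by blast
  then show ?thesis
  proof cases
    case 1
    have "\<exists>c. b y u = s c u"
      by (rule ad_iter_eigenvector[OF _ _ d]) (use 1 bracket_H_e diag in auto)
    then show ?thesis using u by (auto simp: span_base span_scale)
  next
    case (2 m)
    then show ?thesis using u by (simp add: span_base ad_closure_step)
  next
    case (3 m)
    have "b (f m) u \<in> span (ad_closure e simple_root {(x, \<delta>)} \<union> {})"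
      by (rule ad_iter_lowering[where D = H and F = f, OF _ _ _ _ _ d])
        (use bracket_f_e_in_H bracket_H_e diag annihilated in \<open>auto simp: span_zero\<close>)
    then show ?thesis using 3 by simp
  qed
qed

lemma annihilated_vector_ideal:
  assumes diag: "\<And>h. h \<in> H \<Longrightarrow> \<exists>c. b h x = s c x"
    and annihilated: "\<And>m. b (f m) x = 0"
    and w: "w \<in> span (ad_closure e simple_root {(x, \<delta>)})"
  shows "b y w \<in> span (ad_closure e simple_root {(x, \<delta>)})"
proof (rule ideal_if_stable_under_generators[OF generated subspace_span _ w])
  show "b y' w' \<in> span (ad_closure e simple_root {(x, \<delta>)})"
    if "y' \<in> H \<union> range e \<union> range f" "w' \<in> span (ad_closure e simple_root {(x, \<delta>)})" for y' w'
    using bracket_right_span_closed[OF subspace_span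
        annihilated_vector_words_stable[OF diag annihilated that(1)] that(2)] .
qed

lemma annihilated_vector_words_degree:
  assumes "ad_iter e simple_root {(x, \<delta>)} u d" and "x \<in> G \<delta>" and "0 < \<delta> t"
  shows "u \<in> G d" and "0 < d t"
proof -
  show "u \<in> G d"
    by (rule ad_iter_homogeneous[OF _ _ assms(1)]) (use e_degree assms(2) in auto)
  show "0 < d t"
    by (rule ad_iter_degree_invariant[OF _ _ assms(1), where Q = "\<lambda>d. 0 < d t"])
      (use assms(3) in \<open>auto simp: deg_add_def simple_root_def\<close>)
qed

text \<open>A positive homogeneous vector killed by all f's generates a graded ideal
  meeting H trivially, and such ideals have been factored out.\<close>
lemma annihilated_vector_zero:
  assumes x: "x \<in> G \<delta>" and pos: "0 < \<delta> t"
    and diag: "\<And>h. h \<in> H \<Longrightarrow> \<exists>c. b h x = s c x"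
    and annihilated: "\<And>m. b (f m) x = 0"
  shows "x = 0"
proof -
  define I where "I = span (ad_closure e simple_root {(x, \<delta>)})"
  note words = annihilated_vector_words_degree[OF _ x pos]
  have ideal: "graded_ideal s b G I"
    unfolding graded_ideal_def
  proof (intro conjI allI impI)
    show "subspace I" by (simp add: I_def)
    show "b y w \<in> I" if "w \<in> I" for y w
      using annihilated_vector_ideal[OF diag annihilated] that unfolding I_def by blast
    have "ad_closure e simple_root {(x, \<delta>)} \<subseteq> (\<Union>\<beta>. I \<inter> G \<beta>)"
      using words(1) unfolding I_def ad_closure_def by (blast intro: span_base)
    then show "I \<subseteq> span (\<Union>\<beta>. I \<inter> G \<beta>)"
      unfolding I_def by (rule span_mono)
  qed
  have "I \<inter> H \<subseteq> {0}"
  proof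
    fix y assume y: "y \<in> I \<inter> H"
    have "ad_closure e simple_root {(x, \<delta>)} \<subseteq> (\<Union>d\<in>{d. 0 < d t}. G d)"
      using words unfolding ad_closure_def by blast
    then have "y \<in> span (\<Union>d\<in>{d. 0 < d t}. G d)"
      using y span_mono unfolding I_def by blast
    then show "y \<in> {0}"
      using homogeneous_in_span_of_other_degrees[of y "\<lambda>_. 0" "{d. 0 < d t}"] y H_degree_zero
      by auto
  qed
  moreover have "0 \<in> I \<inter> H"
    using subspace_0[OF H_subspace] by (simp add: I_def span_zero)
  ultimately have "I = {0}"
    using graded_ideal_trivial[OF ideal] by blast
  moreover have "x \<in> I"
    unfolding I_def by (rule span_base, rule ad_closure_base) simp
  ultimately show ?thesis by simp
qed

section \<open>The alpha_i-string through alpha_k\<close>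

definition string_vector :: "'i \<Rightarrow> 'i \<Rightarrow> nat \<Rightarrow> 'g" where
  "string_vector i k n = (b (e i) ^^ n) (e k)"

lemma string_vector_0 [simp]: "string_vector i k 0 = e k"
  by (simp add: string_vector_def)

lemma string_vector_Suc [simp]: "string_vector i k (Suc n) = b (e i) (string_vector i k n)"
  by (simp add: string_vector_def)

lemma pos_word_string_vector: "pos_word (string_vector i k n) (string_deg (simple_root k) i n)"
proof (induction n)
  case 0
  have "string_deg (simple_root k) i 0 = simple_root k"
    by (auto simp: deg_add_def deg_smul_def)
  then show ?case by (auto intro: ad_iter.base)
next
  case (Suc n)
  have "string_deg (simple_root k) i (Suc n) = deg_add (simple_root i) (string_deg (simple_root k) i n)"
    by (auto simp: deg_add_def deg_smul_def simple_root_def)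
  then show ?case using ad_iter.step[OF Suc.IH] by simp
qed

lemma bracket_H_string_vector:
  "h \<in> H \<Longrightarrow> b h (string_vector i k n) = s (xi k h + of_nat n * xi i h) (string_vector i k n)"
proof (induction n)
  case 0
  then show ?case by (simp add: bracket_H_e)
next
  case (Suc n)
  then show ?case
    by (simp add: bracket_leibniz[of h "e i"] bracket_H_e bracket_scale_left bracket_scale_right
        algebra_simps flip: scale_left_distrib)
qed

lemma bracket_f_string_vector_other:
  assumes "j \<noteq> i" and "k \<noteq> i"
  shows "b (f j) (string_vector i k (Suc (Suc n))) = 0"
proof -
  have step: "b (f j) (string_vector i k (Suc m)) = b (e i) (b (f j) (string_vector i k m))" for m
    using bracket_leibniz[of "f j" "e i"] assms(1) by (simp add: bracket_f_e)
  have "b (f j) (e k) = (if j = k then - hh k else 0)"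
    by (simp add: bracket_f_e)
  moreover have "b (e i) (- hh k) = s (A k i) (e i)"
    by (subst bracket_antisym) (simp add: bracket_neg_left bracket_H_e hh_in_H xi_hh)
  ultimately have "b (f j) (string_vector i k (Suc 0)) = (if j = k then s (A k i) (e i) else 0)"
    by (simp only: step) simp
  then have "b (f j) (string_vector i k (Suc (Suc 0))) = 0"
    by (simp only: step[of "Suc 0"]) (simp add: bracket_scale_right)
  then show ?thesis
    by (induction n) (simp_all only: step bracket_zero_right)
qed

lemma bracket_f_string_vector:
  assumes "k \<noteq> i"
  shows "b (f i) (string_vector i k (Suc n))
    = s (- (\<Sum>m<Suc n. A i k + of_nat m * A i i)) (string_vector i k n)"
proof (induction n)
  case 0
  show ?case
    using assms by (simp add: bracket_leibniz[of "f i" "e i"] bracket_f_e bracket_neg_left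
        bracket_H_e hh_in_H xi_hh)
next
  case (Suc n)
  let ?x = "string_vector i k (Suc n)"
  have "b (f i) (string_vector i k (Suc (Suc n))) = b (b (f i) (e i)) ?x + b (e i) (b (f i) ?x)"
    by (simp only: string_vector_Suc[of i k "Suc n"]) (rule bracket_leibniz)
  also have "b (f i) (e i) = - hh i"
    by (simp add: bracket_f_e)
  also have "b (- hh i) ?x = s (- (A i k + of_nat (Suc n) * A i i)) ?x"
    by (simp only: bracket_neg_left bracket_H_string_vector[OF hh_in_H] xi_hh scale_minus_left)
  also have "b (e i) (b (f i) ?x) = s (- (\<Sum>m<Suc n. A i k + of_nat m * A i i)) ?x"
    by (simp only: Suc.IH bracket_scale_right) simp
  finally show ?case
    by (simp only: sum.lessThan_Suc[of _ "Suc n"] flip: scale_left_distrib) (simp add: algebra_simps)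
qed

lemma string_vector_vanishes:
  assumes ki: "k \<noteq> i" and n: "2 \<le> n" and coeff: "(\<Sum>m<n. A i k + of_nat m * A i i) = 0"
  shows "string_vector i k n = 0"
proof (rule annihilated_vector_zero)
  show "string_vector i k n \<in> G (string_deg (simple_root k) i n)"
    by (rule pos_word_degree[OF pos_word_string_vector])
  show "0 < string_deg (simple_root k) i n k"
    using ki by (simp add: deg_add_def deg_smul_def simple_root_def)
  show "\<exists>c. b h (string_vector i k n) = s c (string_vector i k n)" if "h \<in> H" for h
    using bracket_H_string_vector[OF that] by blast
  obtain n' where n': "n = Suc (Suc n')"
    using n by (metis add_2_eq_Suc le_Suc_ex)
  show "b (f m) (string_vector i k n) = 0" for m
  proof (cases "m = i")
    case True
    then show ?thesis
      using bracket_f_string_vector[OF ki, of "Suc n'"] coeff unfolding n'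
      by (simp only: minus_zero scale_zero_left)
  next
    case False
    then show ?thesis
      using bracket_f_string_vector_other[OF False ki] n' by simp
  qed
qed

lemma pos_word_on_single_root:
  assumes "pos_word v \<delta>" and "\<forall>t. t \<noteq> i \<longrightarrow> \<delta> t = 0"
  shows "v = e i \<and> \<delta> = simple_root i \<or> v = 0"
  using assms
proof (induction rule: ad_iter.induct)
  case (base x d)
  then obtain m where "x = e m" "d = simple_root m" by blast
  moreover have "m = i"
    using base.prems \<open>d = simple_root m\<close> by (auto simp: simple_root_def)
  ultimately show ?case by blast
next
  case (step v \<delta> m)
  have "m = i"
    using step.prems pos_word_nonneg[OF step.hyps, of m] by (auto simp: deg_add_def simple_root_def)
  moreover have "\<forall>t. t \<noteq> i \<longrightarrow> \<delta> t = 0"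
    using step.prems \<open>m = i\<close> by (auto simp: deg_add_def simple_root_def)
  ultimately show ?case
    using step.IH by auto
qed

lemma pos_word_on_string:
  assumes "pos_word v \<delta>" and ki: "k \<noteq> i"
    and "\<forall>t. t \<noteq> i \<and> t \<noteq> k \<longrightarrow> \<delta> t = 0" and "\<delta> k = 1"
  shows "\<exists>c. v = s c (string_vector i k (nat (\<delta> i)))"
  using assms(1,3,4)
proof (induction rule: ad_iter.induct)
  case (base x d)
  then obtain m where "x = e m" "d = simple_root m" by blast
  moreover have "m = k"
    using base.prems \<open>d = simple_root m\<close> by (auto simp: simple_root_def split: if_splits)
  ultimately have "x = s 1 (string_vector i k (nat (d i)))"
    using ki by (simp add: simple_root_def)
  then show ?case by blast
next
  case (step v \<delta> m)
  let ?d = "deg_add (simple_root m) \<delta>"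
  have nonneg: "0 \<le> \<delta> t" for t
    using pos_word_nonneg[OF step.hyps] .
  have "m = i \<or> m = k"
    using step.prems(1) nonneg[of m] by (auto simp: deg_add_def simple_root_def)
  then show ?case
  proof
    assume "m = i"
    then have "\<forall>t. t \<noteq> i \<and> t \<noteq> k \<longrightarrow> \<delta> t = 0" "\<delta> k = 1" "nat (?d i) = Suc (nat (\<delta> i))"
      using step.prems ki nonneg[of i] by (auto simp: deg_add_def simple_root_def)
    with step.IH \<open>m = i\<close> show ?case
      by (auto simp: bracket_scale_right)
  next
    assume "m = k"
    then have "\<forall>t. t \<noteq> i \<longrightarrow> \<delta> t = 0"
      using step.prems ki by (auto simp: deg_add_def simple_root_def)
    then have "v = e i \<and> \<delta> = simple_root i \<or> v = 0"
      by (rule pos_word_on_single_root[OF step.hyps])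
    moreover have "b (e k) (e i) = s (-1) (string_vector i k 1)"
      by (simp add: bracket_antisym[of "e k"])
    ultimately show ?case
      using \<open>m = k\<close> ki
      by (auto simp: deg_add_def simple_root_def simp del: string_vector_Suc
          intro: exI[of _ 0] exI[of _ "-1"])
  qed
qed

lemma root_space_beyond_string_vanishes:
  assumes ki: "k \<noteq> i" and vanish: "string_vector i k n = 0"
  shows "G (string_deg (simple_root k) i n) = {0}"
proof -
  let ?\<gamma> = "string_deg (simple_root k) i n"
  have "{v. pos_word v ?\<gamma>} \<subseteq> {0}"
  proof
    fix v assume "v \<in> {v. pos_word v ?\<gamma>}"
    then obtain c where "v = s c (string_vector i k (nat (?\<gamma> i)))"
      using pos_word_on_string[of v ?\<gamma> k i] ki by (auto simp: deg_add_def deg_smul_def simple_root_def)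
    then show "v \<in> {0}"
      using vanish ki by (simp add: deg_add_def deg_smul_def simple_root_def)
  qed
  then have "span {v. pos_word v ?\<gamma>} \<subseteq> {0}"
    using span_minimal[OF _ subspace_single_0] by blast
  moreover have "?\<gamma> \<noteq> (\<lambda>_. 0)" "\<forall>t. 0 \<le> ?\<gamma> t"
    by (auto simp: deg_add_def deg_smul_def simple_root_def fun_eq_iff)
  ultimately show ?thesis
    using root_space_spanned_by_words subspace_0[OF G_subspace] by blast
qed

lemma e_nonzero: "e k \<noteq> 0"
proof
  assume "e k = 0"
  then show False
    using bracket_e_f[of k k] hh_nonzero[of k] by simp
qed

lemma simple_root_pos_root: "simple_root k \<in> pos_roots G"
proof -
  have "G (simple_root k) \<noteq> {0}"
    using e_degree[of k] e_nonzero[of k] by blast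
  then show ?thesis
    by (auto simp: pos_roots_def simple_root_def fun_eq_iff)
qed

lemma simple_root_string_gen:
  assumes ki: "k \<noteq> i" and vanish: "string_vector i k n = 0"
  shows "\<exists>l\<in>{1..n}. simple_root k \<in> string_gen G i l"
proof (rule string_gen_first_gap)
  have "string_deg (simple_root k) i 0 = simple_root k"
    by (auto simp: deg_add_def deg_smul_def)
  then show "string_deg (simple_root k) i 0 \<in> pos_roots G"
    using simple_root_pos_root by simp
  show "deg_add (simple_root k) (neg_simple_root i) \<notin> pos_roots G"
    using ki by (auto simp: pos_roots_def deg_add_def deg_smul_def simple_root_def dest!: spec[of _ i])
  show "simple_root k \<noteq> simple_root i"
    using ki by (auto simp: simple_root_def fun_eq_iff)
  show "string_deg (simple_root k) i n \<notin> pos_roots G"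
    using root_space_beyond_string_vanishes[OF ki vanish] by (simp add: pos_roots_def)
qed

section \<open>Root spaces in the generated subalgebra\<close>

lemma pos_word_in_subalgebra:
  assumes S: "subspace S" "lie_closed b S" "\<And>x. x \<in> S \<Longrightarrow> b (e i) x \<in> S"
    and e_S: "\<And>m. m \<noteq> i \<Longrightarrow> e m \<in> S"
    and "pos_word v \<delta>"
  shows "v \<in> S \<or> v = e i \<and> \<delta> = simple_root i"
  using assms(5)
proof (induction rule: ad_iter.induct)
  case (base x d)
  then obtain m where "x = e m" "d = simple_root m" by blast
  then show ?case using e_S by (cases "m = i") auto
next
  case (step v \<delta> m)
  have "b (e m) v \<in> S"
  proof (cases "m = i")
    case True
    then show ?thesis using step.IH S(3) subspace_0[OF S(1)] by auto
  next
    case False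
    then have "e m \<in> S" by (rule e_S)
    from step.IH show ?thesis
    proof
      assume "v \<in> S"
      then show ?thesis using \<open>e m \<in> S\<close> S(2) unfolding lie_closed_def by blast
    next
      assume "v = e i \<and> \<delta> = simple_root i"
      then have "b (e m) v = - b (e i) (e m)"
        using bracket_antisym[of "e m" "e i"] by simp
      then show ?thesis using subspace_neg[OF S(1) S(3)[OF \<open>e m \<in> S\<close>]] by simp
    qed
  qed
  then show ?case by blast
qed

lemma root_space_in_subalgebra:
  assumes S: "subspace S" "lie_closed b S" "\<And>x. x \<in> S \<Longrightarrow> b (e i) x \<in> S"
    and e_S: "\<And>m. m \<noteq> i \<Longrightarrow> e m \<in> S"
    and \<gamma>: "\<forall>t. 0 \<le> \<gamma> t" "\<gamma> \<noteq> (\<lambda>_. 0)" "\<gamma> \<noteq> simple_root i"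
  shows "G \<gamma> \<subseteq> S"
proof -
  have "{v. pos_word v \<gamma>} \<subseteq> S"
    using pos_word_in_subalgebra[OF S e_S] \<gamma>(3) by blast
  then show ?thesis
    using root_space_spanned_by_words[OF \<gamma>(1,2)] span_minimal[OF _ S(1)] by blast
qed

lemma M_sub_subset_subalgebra:
  assumes S: "subspace S" "lie_closed b S" "\<And>x. x \<in> S \<Longrightarrow> b (e i) x \<in> S"
    and e_S: "\<And>m. m \<noteq> i \<Longrightarrow> e m \<in> S"
    and "1 \<le> j" and \<beta>: "\<beta> \<in> string_gen G i j"
  shows "M_sub s G i \<beta> j \<subseteq> S"
proof -
  have "\<beta> \<in> pos_roots G" "\<beta> \<noteq> simple_root i"
    using string_gen_pos_root[OF \<beta> \<open>1 \<le> j\<close>] \<beta> by (simp_all add: string_gen_def)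
  have "G (string_deg \<beta> i n) \<subseteq> S" if "n < j" for n
  proof (rule root_space_in_subalgebra[OF S e_S])
    show "\<forall>t. 0 \<le> string_deg \<beta> i n t" "string_deg \<beta> i n \<noteq> (\<lambda>_. 0)"
      using \<beta> that unfolding string_gen_def pos_roots_def by blast+
    show "string_deg \<beta> i n \<noteq> simple_root i"
      by (rule string_deg_ne_simple_root) fact+
  qed
  then show ?thesis
    unfolding M_sub_def by (intro span_minimal[OF _ S(1)]) blast
qed

lemma e_in_M_sub: "1 \<le> l \<Longrightarrow> e m \<in> M_sub s G i (simple_root m) l"
proof -
  assume "1 \<le> l"
  have "string_deg (simple_root m) i 0 = simple_root m"
    by (auto simp: deg_add_def deg_smul_def)
  then show ?thesis
    unfolding M_sub_def using \<open>1 \<le> l\<close> e_degree[of m] by (intro span_base UN_I[of 0]) auto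
qed

lemma M_sub_subset_rep_subalg_gen:
  assumes vanish: "\<And>k. k \<noteq> i \<Longrightarrow> string_vector i k p = 0"
    and "1 \<le> j" and "\<beta> \<in> string_gen G i j"
  shows "M_sub s G i \<beta> j \<subseteq> rep_subalg_gen s b (e i)
    (\<Union>{M_sub s G i (simple_root k) l | k l. k \<noteq> i \<and> l \<in> {1..p} \<and> simple_root k \<in> string_gen G i l})"
  unfolding rep_subalg_gen_def
proof (rule Inter_greatest)
  fix S assume "S \<in> {S. S \<subseteq> derived_alg s b \<and> subspace S \<and> lie_closed b S \<and> (\<forall>x\<in>S. b (e i) x \<in> S)
    \<and> \<Union>{M_sub s G i (simple_root k) l | k l. k \<noteq> i \<and> l \<in> {1..p} \<and> simple_root k \<in> string_gen G i l} \<subseteq> S}"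
  then have S: "subspace S" "lie_closed b S" "\<And>x. x \<in> S \<Longrightarrow> b (e i) x \<in> S"
    and gens: "\<And>k l. k \<noteq> i \<Longrightarrow> l \<in> {1..p} \<Longrightarrow> simple_root k \<in> string_gen G i l
      \<Longrightarrow> M_sub s G i (simple_root k) l \<subseteq> S"
    by blast+
  have "e m \<in> S" if m: "m \<noteq> i" for m
  proof -
    obtain l where l: "l \<in> {1..p}" "simple_root m \<in> string_gen G i l"
      using simple_root_string_gen[OF m vanish[OF m]] by blast
    then show ?thesis
      using gens[OF m l] e_in_M_sub[of l m] by auto
  qed
  then show "M_sub s G i \<beta> j \<subseteq> S"
    using M_sub_subset_subalgebra[OF S] assms(2,3) by blast
qed

end

theorem proposition4p8:
  fixes A :: "'i::finite \<Rightarrow> 'i \<Rightarrow> 'k::field"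
    and s :: "'k \<Rightarrow> 'g::ab_group_add \<Rightarrow> 'g" and b :: "'g \<Rightarrow> 'g \<Rightarrow> 'g"
    and H :: "'g set" and hh :: "'i \<Rightarrow> 'g" and xi :: "'i \<Rightarrow> 'g \<Rightarrow> 'k"
    and e f :: "'i \<Rightarrow> 'g" and G :: "('i \<Rightarrow> int) \<Rightarrow> 'g set"
    and p :: nat and i :: 'i and j :: nat and \<beta> :: "'i \<Rightarrow> int"
  assumes "alg_closed_field TYPE('k)"
    and "prime p" and "CHAR('k) = p"
    and "admissible_matrix A"
    and "is_contragredient A s b H hh xi e f G"
    and "fin_dim s"
    and "j \<in> {1..p}"
    and "\<beta> \<in> string_gen G i j"
  shows "M_sub s G i \<beta> j \<subseteq>
     rep_subalg_gen s b (e i)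
       (\<Union>{M_sub s G i (simple_root k) l | k l. k \<noteq> i \<and> l \<in> {1..p} \<and> simple_root k \<in> string_gen G i l})"
proof -
  have lie: "lie_algebra s b"
    using assms(5) by (simp add: is_contragredient_def)
  then have "vector_space s"
    by (simp add: lie_algebra_def)
  interpret contragredient s b A H hh xi e f G
    by (intro contragredient.intro lie_alg.intro lie_alg_axioms.intro contragredient_axioms.intro
        \<open>vector_space s\<close> lie assms(5))
  have "string_vector i k p = 0" if "k \<noteq> i" for k
  proof (rule string_vector_vanishes[OF that])
    show "2 \<le> p"
      using assms(2) by (rule prime_ge_2_nat)
    show "(\<Sum>m<p. A i k + of_nat m * A i i) = 0"
      using sum_string_coeff_CHAR[of "A i i" "A i k"] assms(3,4) by (simp add: admissible_matrix_def)
  qed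
  then show ?thesis
    using M_sub_subset_rep_subalg_gen assms(7,8) by simp
qed

end
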